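(* The function $\check J$ is continuous on $\mathcal M_T$.
   Context: Fix integers $n,m,T\ge 1$, a scalar $\varepsilon>0$, matrices $A_k\in\mathbb R^{n\times n}$, $B_k\in\mathbb R^{n\times m}$ ($k=0,\dots,T-1$), and symmetric positive definite matrices $R_k\in\mathbb R^{m\times m}$, $\Sigma_{w_k}\in\mathbb R^{n\times n}$ ($k=0,\dots,T-1$), $F,\Sigma_{x_{\mathrm{ini}}}\in\mathbb R^{n\times n}$. Let $\mathcal M_T=(\mathbb S^m_{\succeq 0})^T$ with $\mathbb S^m_{\succeq0}$ the symmetric PSD $m\times m$ matrices; $\Sigma^{1/2}$ the PSD square root, $|\cdot|$ the determinant. For $(\Sigma_{\rho_0},\dots,\Sigma_{\rho_{T-1}})\in\mathcal M_T$ define backwards $\Pi_T=F$, $C_k=(R_k+B_k^\top\Pi_{k+1}B_k)/\varepsilon$, $\Pi_k=A_k^\top\Pi_{k+1}A_k-\frac1\varepsilon A_k^\top\Pi_{k+1}B_k\Sigma_{\rho_k}^{1/2}(I+\Sigma_{\rho_k}^{1/2}C_k\Sigma_{\rho_k}^{1/2})^{-1}\Sigma_{\rho_k}^{1/2}B_k^\top\Pi_{k+1}A_k$, $\Sigma_{Q_k}=\varepsilon(R_k+B_k^\top\Pi_{k+1}B_k)^{-1}$, and $\check J(\Sigma_{\rho_0},\dots,\Sigma_{\rho_{T-1}})=\frac12\Big[\mathrm{Tr}(\Pi_0\Sigma_{x_{\mathrm{ini}}})+\sum_{k=0}^{T-1}\Big(\varepsilon\log\frac{|\Sigma_{\rho_k}+\Sigma_{Q_k}|}{|\Sigma_{Q_k}|}+\mathrm{Tr}(\Pi_{k+1}\Sigma_{w_k})\Big)\Big]$.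 *)

theory Defs
  imports "HOL-Analysis.Analysis"
begin

definition psd :: "real^'m^'m \<Rightarrow> bool" where
  "psd M \<longleftrightarrow> transpose M = M \<and> (\<forall>x. 0 \<le> x \<bullet> (M *v x))"

definition pd :: "real^'m^'m \<Rightarrow> bool" where
  "pd M \<longleftrightarrow> transpose M = M \<and> (\<forall>x. x \<noteq> 0 \<longrightarrow> 0 < x \<bullet> (M *v x))"

definition psd_sqrt :: "real^'m^'m \<Rightarrow> real^'m^'m" where
  "psd_sqrt M = (THE S. psd S \<and> S ** S = M)"

text \<open>One backward step of the Riccati-type recursion: given \<Pi>_{k+1} = P, compute \<Pi>_k.\<close>
definition Pi_step ::
  "real \<Rightarrow> real^'n^'n \<Rightarrow> real^'m^'n \<Rightarrow> real^'m^'m \<Rightarrow> real^'m^'m \<Rightarrow> real^'n^'n \<Rightarrow> real^'n^'n" where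
  "Pi_step \<epsilon> Ak Bk Rk Srho P =
     (let C = (1/\<epsilon>) *\<^sub>R (Rk + transpose Bk ** P ** Bk);
          H = psd_sqrt Srho
      in transpose Ak ** P ** Ak
         - (1/\<epsilon>) *\<^sub>R (transpose Ak ** P ** Bk ** H ** matrix_inv (mat 1 + H ** C ** H)
                         ** H ** transpose Bk ** P ** Ak))"

text \<open>PiR j = \<Pi>_{T-j}, for j \<le> T.\<close>
fun PiR ::
  "real \<Rightarrow> nat \<Rightarrow> (nat \<Rightarrow> real^'n^'n) \<Rightarrow> (nat \<Rightarrow> real^'m^'n) \<Rightarrow> (nat \<Rightarrow> real^'m^'m)
   \<Rightarrow> real^'n^'n \<Rightarrow> (nat \<Rightarrow> real^'m^'m) \<Rightarrow> nat \<Rightarrow> real^'n^'n" where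
  "PiR \<epsilon> T A B R F S 0 = F"
| "PiR \<epsilon> T A B R F S (Suc j) =
     Pi_step \<epsilon> (A (T - Suc j)) (B (T - Suc j)) (R (T - Suc j)) (S (T - Suc j)) (PiR \<epsilon> T A B R F S j)"

definition Pi ::
  "real \<Rightarrow> nat \<Rightarrow> (nat \<Rightarrow> real^'n^'n) \<Rightarrow> (nat \<Rightarrow> real^'m^'n) \<Rightarrow> (nat \<Rightarrow> real^'m^'m)
   \<Rightarrow> real^'n^'n \<Rightarrow> (nat \<Rightarrow> real^'m^'m) \<Rightarrow> nat \<Rightarrow> real^'n^'n" where
  "Pi \<epsilon> T A B R F S k = PiR \<epsilon> T A B R F S (T - k)"

definition SigmaQ ::
  "real \<Rightarrow> nat \<Rightarrow> (nat \<Rightarrow> real^'n^'n) \<Rightarrow> (nat \<Rightarrow> real^'m^'n) \<Rightarrow> (nat \<Rightarrow> real^'m^'m)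
   \<Rightarrow> real^'n^'n \<Rightarrow> (nat \<Rightarrow> real^'m^'m) \<Rightarrow> nat \<Rightarrow> real^'m^'m" where
  "SigmaQ \<epsilon> T A B R F S k =
     \<epsilon> *\<^sub>R matrix_inv (R k + transpose (B k) ** Pi \<epsilon> T A B R F S (Suc k) ** B k)"

text \<open>The cost function \<check>J, as a function of the sequence S = (\<Sigma>_{\<rho>_0},...,\<Sigma>_{\<rho>_{T-1}})
  (entries S k with k \<ge> T are irrelevant).\<close>
definition Jcheck ::
  "real \<Rightarrow> nat \<Rightarrow> (nat \<Rightarrow> real^'n^'n) \<Rightarrow> (nat \<Rightarrow> real^'m^'n) \<Rightarrow> (nat \<Rightarrow> real^'m^'m)
   \<Rightarrow> (nat \<Rightarrow> real^'n^'n) \<Rightarrow> real^'n^'n \<Rightarrow> real^'n^'n \<Rightarrow> (nat \<Rightarrow> real^'m^'m) \<Rightarrow> real" where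
  "Jcheck \<epsilon> T A B R Sw F Sx S =
     (1/2) * (trace (Pi \<epsilon> T A B R F S 0 ** Sx)
       + (\<Sum>k<T. \<epsilon> * ln (det (S k + SigmaQ \<epsilon> T A B R F S k) / det (SigmaQ \<epsilon> T A B R F S k))
                + trace (Pi \<epsilon> T A B R F S (Suc k) ** Sw k)))"

text \<open>\<M>_T, encoded as sequences whose first T entries are PSD.\<close>
definition MT :: "nat \<Rightarrow> (nat \<Rightarrow> real^'m^'m) set" where
  "MT T = {S. \<forall>k<T. psd (S k)}"

end

theory Submission
  imports Defs
begin

text \<open>Write \<open>H\<close> for the square root of \<open>\<Sigma>\<^sub>\<rho>\<^sub>k\<close>. The push-through identity
  \<open>H (I + H C H)\<^sup>-\<^sup>1 H = \<Sigma>\<^sub>\<rho>\<^sub>k (I + C \<Sigma>\<^sub>\<rho>\<^sub>k)\<^sup>-\<^sup>1\<close> removes the square root from the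
  Riccati step, leaving a rational expression in \<open>\<Sigma>\<^sub>\<rho>\<^sub>k\<close> and \<open>\<Pi>\<^sub>k\<^sub>+\<^sub>1\<close> whose only inverse,
  that of \<open>I + C \<Sigma>\<^sub>\<rho>\<^sub>k\<close>, exists because \<open>I + H C H\<close> is positive definite. The step also
  preserves positive semidefiniteness, being a congruence of the Schur complement
  \<open>P - P M (E + M\<^sup>T P M)\<^sup>-\<^sup>1 M\<^sup>T P\<close> with \<open>M = B H\<close> and \<open>E = \<epsilon> I + H R H\<close>. So by backward
  induction every \<open>\<Pi>\<^sub>k\<close> is continuous and positive semidefinite on \<open>\<M>\<^sub>T\<close>; then
  \<open>R\<^sub>k + B\<^sub>k\<^sup>T \<Pi>\<^sub>k\<^sub>+\<^sub>1 B\<^sub>k\<close>, \<open>\<Sigma>\<^sub>Q\<^sub>k\<close> and \<open>\<Sigma>\<^sub>\<rho>\<^sub>k + \<Sigma>\<^sub>Q\<^sub>k\<close> are positive definite, so the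
  determinants in the logarithms never vanish. The square root itself exists and is unique by the
  spectral theorem, obtained by maximising the Rayleigh quotient on invariant subspaces.\<close>

subsection \<open>Matrix algebra and continuity\<close>

lemma matrix_inv_right:
  fixes A :: "'a::field^'n^'n"
  assumes "invertible A"
  shows "A ** matrix_inv A = mat 1"
  using someI_ex[OF assms[unfolded invertible_def]] by (simp add: matrix_inv_def)

lemma matrix_inv_left:
  fixes A :: "'a::field^'n^'n"
  assumes "invertible A"
  shows "matrix_inv A ** A = mat 1"
  using someI_ex[OF assms[unfolded invertible_def]] by (simp add: matrix_inv_def)

lemma matrix_inv_unique:
  fixes A B :: "'a::field^'n^'n"
  assumes "A ** B = mat 1"
  shows "matrix_inv A = B"
proof -
  have inv: "invertible A"
    using assms invertible_right_inverse by blast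
  have "matrix_inv A = matrix_inv A ** (A ** B)" by (simp add: assms)
  also have "\<dots> = B" by (simp add: matrix_mul_assoc matrix_inv_left[OF inv])
  finally show ?thesis .
qed

lemma matrix_inv_scaleR:
  fixes A :: "real^'n^'n"
  assumes "invertible A" "c \<noteq> 0"
  shows "matrix_inv (c *\<^sub>R A) = (1 / c) *\<^sub>R matrix_inv A"
  by (rule matrix_inv_unique)
    (simp add: assms matrix_scalar_ac scalar_matrix_assoc[symmetric] matrix_inv_right)

lemma transpose_matrix_inv:
  fixes A :: "real^'n^'n"
  assumes "invertible A"
  shows "transpose (matrix_inv A) = matrix_inv (transpose A)"
  by (metis matrix_inv_unique matrix_transpose_mul matrix_inv_left[OF assms] transpose_mat)

lemma transpose_add: "transpose (A + B) = transpose A + transpose (B :: 'a::semiring_1^'n^'m)"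
  by (simp add: transpose_def vec_eq_iff)

lemma transpose_diff: "transpose (A - B) = transpose A - transpose (B :: 'a::ring_1^'n^'m)"
  by (simp add: transpose_def vec_eq_iff)

lemma matrix_add_rdistrib: "(A + B) ** C = A ** C + B ** (C :: 'a::semiring_1^'k^'m)"
  by (simp add: matrix_matrix_mult_def vec_eq_iff sum.distrib distrib_right)

lemma matrix_diff_ldistrib: "A ** (B - C) = A ** B - A ** (C :: 'a::ring_1^'k^'m)"
  by (simp add: matrix_matrix_mult_def vec_eq_iff sum_subtractf right_diff_distrib)

lemma matrix_diff_rdistrib: "(A - B) ** C = A ** C - B ** (C :: 'a::ring_1^'k^'m)"
  by (simp add: matrix_matrix_mult_def vec_eq_iff sum_subtractf left_diff_distrib)

lemma inner_transpose_matrix_vector: "x \<bullet> (transpose B *v y) = (B *v x) \<bullet> (y :: real^'n)"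
  by (metis dot_lmul_matrix vector_transpose_matrix)

lemma inner_symmetric_matrix_vector:
  "transpose M = M \<Longrightarrow> x \<bullet> (M *v y) = (M *v x) \<bullet> (y :: real^'n)"
  by (metis inner_transpose_matrix_vector)

lemma invertible_if_kernel_trivial:
  fixes A :: "real^'n^'n"
  assumes "\<And>x. A *v x = 0 \<Longrightarrow> x = 0"
  shows "invertible A"
proof -
  have "inj ((*v) A)"
    using assms linear_injective_0[OF matrix_vector_mul_linear] by blast
  then show ?thesis
    using det_nz_iff_inj invertible_det_nz matrix_of_matrix_vector_mul by fastforce
qed

lemma invertible_one_plus_mult_commute:
  fixes A :: "real^'k^'m" and B :: "real^'m^'k"
  assumes "invertible (mat 1 + A ** B)"
  shows "invertible (mat 1 + B ** A)"
proof (rule invertible_if_kernel_trivial)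
  fix x assume x: "(mat 1 + B ** A) *v x = 0"
  then have x_eq: "x = - (B *v (A *v x))"
    by (simp add: matrix_vector_mult_add_rdistrib matrix_vector_mul_assoc eq_neg_iff_add_eq_0)
  have "(mat 1 + A ** B) *v (A *v x) = A *v ((mat 1 + B ** A) *v x)"
    by (simp add: matrix_vector_mult_add_rdistrib matrix_vector_right_distrib
        matrix_vector_mul_assoc[symmetric])
  then have "(mat 1 + A ** B) *v (A *v x) = 0" using x by simp
  then have "A *v x = 0"
    by (metis assms matrix_inv_left matrix_vector_mul_assoc matrix_vector_mul_lid
        matrix_vector_mult_0_right)
  then show "x = 0" using x_eq by simp
qed

lemma matrix_inv_one_plus_mult_commute:
  fixes A :: "real^'k^'m" and B :: "real^'m^'k"
  assumes "invertible (mat 1 + A ** B)"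
  shows "matrix_inv (mat 1 + A ** B) ** A = A ** matrix_inv (mat 1 + B ** A)"
proof -
  have inv: "invertible (mat 1 + B ** A)"
    using assms by (rule invertible_one_plus_mult_commute)
  have comm: "(mat 1 + A ** B) ** A = A ** (mat 1 + B ** A)"
    by (simp add: matrix_add_ldistrib matrix_add_rdistrib matrix_mul_assoc)
  have "matrix_inv (mat 1 + A ** B) ** A
      = matrix_inv (mat 1 + A ** B) ** ((mat 1 + A ** B) ** A) ** matrix_inv (mat 1 + B ** A)"
    unfolding comm by (simp add: matrix_mul_assoc[symmetric] matrix_inv_right[OF inv])
  also have "\<dots> = A ** matrix_inv (mat 1 + B ** A)"
    by (simp add: matrix_mul_assoc matrix_inv_left[OF assms])
  finally show ?thesis .
qed

lemma continuous_on_matrix_mult [continuous_intros]: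
  fixes f :: "'a::topological_space \<Rightarrow> real^'k^'n" and g :: "'a \<Rightarrow> real^'m^'k"
  assumes "continuous_on X f" "continuous_on X g"
  shows "continuous_on X (\<lambda>x. f x ** g x)"
  unfolding matrix_matrix_mult_def
  by (intro continuous_on_vec_lambda continuous_on_sum continuous_on_mult
      continuous_on_component assms)

lemma continuous_on_det [continuous_intros]:
  fixes f :: "'a::topological_space \<Rightarrow> real^'n^'n"
  assumes "continuous_on X f"
  shows "continuous_on X (\<lambda>x. det (f x))"
  unfolding det_def
  by (intro continuous_on_sum continuous_on_mult continuous_on_const continuous_on_prod
      continuous_on_component assms)

lemma continuous_on_trace [continuous_intros]:
  fixes f :: "'a::topological_space \<Rightarrow> real^'n^'n"
  assumes "continuous_on X f"
  shows "continuous_on X (\<lambda>x. trace (f x))"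
  unfolding trace_def
  by (intro continuous_on_sum continuous_on_component assms)

lemma matrix_inv_cramer:
  fixes A :: "real^'n^'n"
  assumes "invertible A"
  shows "matrix_inv A =
    (\<chi> k j. det (\<chi> i l. if l = k then (if i = j then 1 else 0) else A $ i $ l) / det A)"
proof -
  have "matrix_inv A $ k $ j =
      det (\<chi> i l. if l = k then (if i = j then 1 else 0) else A $ i $ l) / det A" for k j
  proof -
    let ?e = "(\<chi> i. if i = j then 1 else 0) :: real^'n"
    have "A *v (matrix_inv A *v ?e) = ?e"
      by (simp add: matrix_vector_mul_assoc matrix_inv_right[OF assms])
    then have "matrix_inv A *v ?e = (\<chi> k. det (\<chi> i l. if l = k then ?e $ i else A $ i $ l) / det A)"
      using cramer assms invertible_det_nz by blast
    moreover have "(matrix_inv A *v ?e) $ k = matrix_inv A $ k $ j"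
      by (simp add: matrix_vector_mult_def if_distrib cong: if_cong)
    ultimately show ?thesis by (simp cong: if_cong)
  qed
  then show ?thesis by (simp add: vec_eq_iff)
qed

lemma continuous_on_matrix_inv [continuous_intros]:
  fixes f :: "'a::topological_space \<Rightarrow> real^'n^'n"
  assumes "continuous_on X f" "\<And>x. x \<in> X \<Longrightarrow> invertible (f x)"
  shows "continuous_on X (\<lambda>x. matrix_inv (f x))"
proof -
  have if_const: "continuous_on X (\<lambda>x. if P then c else g x)" if "continuous_on X g" for P c g
    using that by (cases P) auto
  have "continuous_on X (\<lambda>x. \<chi> k j.
      det (\<chi> i l. if l = k then (if i = j then 1 else 0) else f x $ i $ l) / det (f x))"
    using assms invertible_det_nz
    by (intro continuous_on_vec_lambda continuous_on_divide continuous_on_det if_const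
        continuous_on_component assms(1)) auto
  then show ?thesis
    by (rule continuous_on_cong[THEN iffD1, rotated 2]) (simp_all add: matrix_inv_cramer assms(2))
qed

subsection \<open>Positive (semi)definite matrices\<close>

lemma pd_imp_psd: "pd A \<Longrightarrow> psd A"
  unfolding pd_def psd_def by (metis inner_zero_left less_eq_real_def matrix_vector_mult_0_right)

lemma psd_add: "psd A \<Longrightarrow> psd B \<Longrightarrow> psd (A + B)"
  unfolding psd_def by (simp add: transpose_add matrix_vector_mult_add_rdistrib inner_add_right)

lemma pd_add_psd: "pd A \<Longrightarrow> psd B \<Longrightarrow> pd (A + B)"
  unfolding pd_def psd_def
  by (simp add: transpose_add matrix_vector_mult_add_rdistrib inner_add_right add_pos_nonneg)

lemma pd_scaleR: "c > 0 \<Longrightarrow> pd A \<Longrightarrow> pd (c *\<^sub>R A)"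
  unfolding pd_def by (simp add: transpose_scalar scaleR_matrix_vector_assoc[symmetric])

lemma psd_scaleR: "c \<ge> 0 \<Longrightarrow> psd A \<Longrightarrow> psd (c *\<^sub>R A)"
  unfolding psd_def by (simp add: transpose_scalar scaleR_matrix_vector_assoc[symmetric])

lemma pd_mat_1: "pd (mat 1)"
  unfolding pd_def by simp

lemma psd_congruence:
  fixes P :: "real^'n^'n" and B :: "real^'m^'n"
  assumes "psd P"
  shows "psd (transpose B ** P ** B)"
  unfolding psd_def
proof
  show "transpose (transpose B ** P ** B) = transpose B ** P ** B"
    using assms by (simp add: psd_def matrix_transpose_mul matrix_mul_assoc)
  have "x \<bullet> ((transpose B ** P ** B) *v x) = (B *v x) \<bullet> (P *v (B *v x))" for x
    by (simp only: matrix_vector_mul_assoc[symmetric] inner_transpose_matrix_vector)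
  then show "\<forall>x. 0 \<le> x \<bullet> ((transpose B ** P ** B) *v x)"
    using assms by (simp add: psd_def)
qed

lemma pd_invertible: "pd A \<Longrightarrow> invertible A"
  unfolding pd_def by (metis inner_zero_right invertible_if_kernel_trivial less_irrefl)

lemma pd_matrix_inv:
  assumes "pd A"
  shows "pd (matrix_inv A)"
  unfolding pd_def
proof (intro conjI allI impI)
  have inv: "invertible A" using assms by (rule pd_invertible)
  show "transpose (matrix_inv A) = matrix_inv A"
    using assms by (simp add: transpose_matrix_inv[OF inv] pd_def)
  fix x :: "real^'a" assume "x \<noteq> 0"
  define y where "y = matrix_inv A *v x"
  have Ay: "A *v y = x"
    by (simp add: y_def matrix_vector_mul_assoc matrix_inv_right[OF inv])
  then have "y \<noteq> 0" using \<open>x \<noteq> 0\<close> by auto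
  then have "0 < y \<bullet> (A *v y)" using assms by (simp add: pd_def)
  then show "0 < x \<bullet> (matrix_inv A *v x)" by (simp add: Ay y_def[symmetric] inner_commute)
qed

subsection \<open>Spectral theorem and the positive semidefinite square root\<close>

lemma linear_coeff_zero_if_quadratic_nonpos:
  fixes a b :: real
  assumes "\<And>t. a * t + b * t\<^sup>2 \<le> 0"
  shows "a = 0"
proof (rule ccontr)
  assume "a \<noteq> 0"
  define s where "s = \<bar>a\<bar> / (\<bar>b\<bar> + 1)"
  have s: "s > 0" using \<open>a \<noteq> 0\<close> by (simp add: s_def)
  have "\<bar>a\<bar> * s \<le> (- b * s) * s"
    using assms[of s] assms[of "- s"] by (cases "a \<ge> 0") (auto simp: power2_eq_square)
  then have "\<bar>a\<bar> \<le> \<bar>b\<bar> * s"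
    using s by (smt (verit) mult_le_cancel_right_pos)
  also have "\<dots> < \<bar>a\<bar>"
    using \<open>a \<noteq> 0\<close> by (simp add: s_def field_simps)
  finally show False by simp
qed

lemma rayleigh_quotient_max_exists:
  fixes M :: "real^'m^'m"
  assumes V: "subspace V" and v: "v \<in> V" "v \<noteq> 0"
  obtains x where "x \<in> V" "x \<bullet> x = 1"
    "\<And>z. z \<in> V \<Longrightarrow> z \<bullet> (M *v z) \<le> (x \<bullet> (M *v x)) * (z \<bullet> z)"
proof -
  let ?q = "\<lambda>x::real^'m. x \<bullet> (M *v x)"
  let ?K = "V \<inter> sphere 0 1"
  have "v /\<^sub>R norm v \<in> ?K" using v V by (simp add: subspace_scale)
  then have K_nonempty: "?K \<noteq> {}" by blast
  have "continuous_on ?K ((*v) M)"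
    by (rule linear_continuous_on) (simp add: linear_linear[symmetric])
  then have "continuous_on ?K ?q"
    by (intro continuous_intros)
  then obtain x where x: "x \<in> ?K" and max: "\<And>y. y \<in> ?K \<Longrightarrow> ?q y \<le> ?q x"
    using continuous_attains_sup[OF closed_Int_compact[OF closed_subspace[OF V] compact_sphere]
        K_nonempty] by blast
  have q_scale: "?q (c *\<^sub>R z) = c\<^sup>2 * ?q z" for c z
    by (simp add: matrix_vector_mult_scaleR power2_eq_square)
  have "?q z \<le> ?q x * (z \<bullet> z)" if "z \<in> V" for z
  proof (cases "z = 0")
    case False
    have "z /\<^sub>R norm z \<in> ?K" using that False V by (simp add: subspace_scale)
    then have "?q (inverse (norm z) *\<^sub>R z) \<le> ?q x" by (rule max)
    then have "?q z / (norm z)\<^sup>2 \<le> ?q x"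
      unfolding q_scale by (simp add: power_inverse divide_inverse mult.commute)
    then show ?thesis using False by (simp add: divide_le_eq dot_square_norm mult.commute)
  qed simp
  with x show thesis by (intro that) (auto simp: dot_square_norm)
qed

text \<open>Maximality of the Rayleigh quotient at \<open>x\<close> in direction \<open>y\<close> gives a quadratic in \<open>t\<close>
  that is nonpositive everywhere, so its linear coefficient \<open>y \<bullet> (M x - l x)\<close> vanishes.\<close>

lemma rayleigh_quotient_max_eigenvector:
  fixes M :: "real^'m^'m"
  assumes sym: "transpose M = M" and V: "subspace V" and invariant: "\<And>y. y \<in> V \<Longrightarrow> M *v y \<in> V"
    and x: "x \<in> V" "x \<bullet> x = 1"
    and max: "\<And>z. z \<in> V \<Longrightarrow> z \<bullet> (M *v z) \<le> (x \<bullet> (M *v x)) * (z \<bullet> z)"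
  shows "M *v x = (x \<bullet> (M *v x)) *\<^sub>R x"
proof -
  define l where "l = x \<bullet> (M *v x)"
  have orth: "y \<bullet> (M *v x - l *\<^sub>R x) = 0" if y: "y \<in> V" for y
  proof -
    have "2 * (y \<bullet> (M *v x - l *\<^sub>R x)) * t + (y \<bullet> (M *v y) - l * (y \<bullet> y)) * t\<^sup>2 \<le> 0" for t
    proof -
      have "x + t *\<^sub>R y \<in> V" using x y V by (simp add: subspace_add subspace_scale)
      then have "(x + t *\<^sub>R y) \<bullet> (M *v (x + t *\<^sub>R y)) \<le> l * ((x + t *\<^sub>R y) \<bullet> (x + t *\<^sub>R y))"
        using max l_def by blast
      then show ?thesis
        using inner_symmetric_matrix_vector[OF sym, of x y] x(2)
        by (simp add: l_def matrix_vector_right_distrib matrix_vector_mult_scaleR inner_add_left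
            inner_add_right inner_diff_right power2_eq_square algebra_simps inner_commute)
    qed
    from linear_coeff_zero_if_quadratic_nonpos[OF this] show ?thesis by simp
  qed
  have "M *v x - l *\<^sub>R x \<in> V"
    using x invariant V by (simp add: subspace_diff subspace_scale)
  from orth[OF this] show ?thesis by (simp add: l_def)
qed

definition orthonormal_eigenbasis :: "real^'m^'m \<Rightarrow> (real^'m) set \<Rightarrow> (real^'m) set \<Rightarrow> bool" where
  "orthonormal_eigenbasis M V U \<longleftrightarrow> finite U \<and> U \<subseteq> V \<and> span U = V \<and> pairwise orthogonal U \<and>
     (\<forall>u\<in>U. norm u = 1 \<and> M *v u = (u \<bullet> (M *v u)) *\<^sub>R u)"

lemma orthonormal_eigenbasis_insert:
  fixes M :: "real^'m^'m"
  assumes V: "subspace V" and x: "x \<in> V" "x \<bullet> x = 1" "M *v x = (x \<bullet> (M *v x)) *\<^sub>R x"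
    and U: "orthonormal_eigenbasis M {y \<in> V. x \<bullet> y = 0} U"
  shows "orthonormal_eigenbasis M V (insert x U)"
  unfolding orthonormal_eigenbasis_def
proof (intro conjI)
  show "finite (insert x U)" "insert x U \<subseteq> V"
    using U x by (auto simp: orthonormal_eigenbasis_def)
  show "pairwise orthogonal (insert x U)"
    using U unfolding orthonormal_eigenbasis_def pairwise_insert orthogonal_def
    by (auto simp: inner_commute)
  show "\<forall>u\<in>insert x U. norm u = 1 \<and> M *v u = (u \<bullet> (M *v u)) *\<^sub>R u"
    using U x by (auto simp: orthonormal_eigenbasis_def norm_eq_1)
  show "span (insert x U) = V"
  proof
    show "span (insert x U) \<subseteq> V"
      using U x V unfolding orthonormal_eigenbasis_def by (intro span_minimal) auto
    show "V \<subseteq> span (insert x U)"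
    proof
      fix v assume v: "v \<in> V"
      have "v - (x \<bullet> v) *\<^sub>R x \<in> {y \<in> V. x \<bullet> y = 0}"
        using v x V by (simp add: subspace_diff subspace_scale inner_diff_right)
      then have "v - (x \<bullet> v) *\<^sub>R x \<in> span (insert x U)"
        using U span_mono[of U "insert x U"] by (auto simp: orthonormal_eigenbasis_def)
      moreover have "(x \<bullet> v) *\<^sub>R x \<in> span (insert x U)"
        by (simp add: span_base span_scale)
      ultimately show "v \<in> span (insert x U)"
        using span_add by fastforce
    qed
  qed
qed

text \<open>Induction on the dimension: peel off one eigenvector \<open>x\<close> and recurse into
  \<open>{y \<in> V. x \<bullet> y = 0}\<close>, which is again invariant because \<open>M\<close> is symmetric.\<close>

lemma orthonormal_eigenbasis_exists_subspace:
  fixes M :: "real^'m^'m"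
  assumes sym: "transpose M = M"
  shows "subspace V \<Longrightarrow> (\<And>y. y \<in> V \<Longrightarrow> M *v y \<in> V) \<Longrightarrow> \<exists>U. orthonormal_eigenbasis M V U"
proof (induction "dim V" arbitrary: V rule: less_induct)
  case less
  show ?case
  proof (cases "V = {0}")
    case True
    then have "orthonormal_eigenbasis M V {}" by (simp add: orthonormal_eigenbasis_def)
    then show ?thesis by blast
  next
    case False
    then obtain v where "v \<in> V" "v \<noteq> 0" using less.prems(1) subspace_0 by blast
    then obtain x where x: "x \<in> V" "x \<bullet> x = 1"
      and max: "\<And>z. z \<in> V \<Longrightarrow> z \<bullet> (M *v z) \<le> (x \<bullet> (M *v x)) * (z \<bullet> z)"
      using rayleigh_quotient_max_exists less.prems(1) by metis
    have Mx: "M *v x = (x \<bullet> (M *v x)) *\<^sub>R x"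
      using rayleigh_quotient_max_eigenvector[OF sym less.prems x max] .
    define V' where "V' = {y \<in> V. x \<bullet> y = 0}"
    have V': "subspace V'"
      using less.prems(1) unfolding V'_def subspace_def by (auto simp: inner_add_right)
    have invariant': "M *v y \<in> V'" if "y \<in> V'" for y
    proof -
      have "x \<bullet> (M *v y) = (M *v x) \<bullet> y" by (rule inner_symmetric_matrix_vector[OF sym])
      also have "\<dots> = 0" using that by (subst Mx) (simp add: V'_def)
      finally show ?thesis using that less.prems(2) by (simp add: V'_def)
    qed
    have "x \<notin> V'" using x by (simp add: V'_def)
    then have "V' \<subset> V" using x(1) unfolding V'_def by blast
    then have "dim V' < dim V"
      using dim_psubset V' less.prems(1) span_eq_iff by metis
    then obtain U' where "orthonormal_eigenbasis M V' U'"
      using less.hyps V' invariant' by blast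
    then show ?thesis
      using orthonormal_eigenbasis_insert[OF less.prems(1) x Mx] by (auto simp: V'_def)
  qed
qed

lemma orthonormal_eigenbasis_exists:
  fixes M :: "real^'m^'m"
  assumes "transpose M = M"
  obtains U where "orthonormal_eigenbasis M UNIV U"
  using orthonormal_eigenbasis_exists_subspace[OF assms, of UNIV] by auto

lemma inner_orthonormal_sum:
  fixes U :: "(real^'m) set"
  assumes "finite U" "pairwise orthogonal U" "\<forall>u\<in>U. norm u = 1" "w \<in> U"
  shows "w \<bullet> (\<Sum>u\<in>U. c u *\<^sub>R u) = c w"
proof -
  have "w \<bullet> (\<Sum>u\<in>U. c u *\<^sub>R u) = (\<Sum>u\<in>U. c u * (w \<bullet> u))"
    by (simp add: inner_sum_right)
  also have "\<dots> = c w * (w \<bullet> w) + (\<Sum>u\<in>U - {w}. c u * (w \<bullet> u))"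
    using assms by (simp add: sum.remove)
  also have "(\<Sum>u\<in>U - {w}. c u * (w \<bullet> u)) = 0"
    using assms(2,4) by (intro sum.neutral) (auto simp: pairwise_def orthogonal_def)
  finally show ?thesis using assms(3,4) by (simp add: norm_eq_1)
qed

lemma orthonormal_eigenbasis_expansion:
  assumes "orthonormal_eigenbasis M UNIV U"
  shows "x = (\<Sum>u\<in>U. (u \<bullet> x) *\<^sub>R u)"
proof -
  have U: "finite U" "pairwise orthogonal U" "\<forall>u\<in>U. norm u = 1" "span U = UNIV"
    using assms unfolding orthonormal_eigenbasis_def by blast+
  define y where "y = x - (\<Sum>u\<in>U. (u \<bullet> x) *\<^sub>R u)"
  have "orthogonal y u" if "u \<in> U" for u
    using inner_orthonormal_sum[OF U(1-3) that, of "\<lambda>u. u \<bullet> x"] unfolding y_def orthogonal_def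
    by (simp add: inner_diff_right inner_commute)
  then have "orthogonal y y" using orthogonal_to_span[of y U y] U(4) by auto
  then show ?thesis by (simp add: y_def orthogonal_def)
qed

lemma symmetric_if_inner_swap:
  fixes A :: "real^'m^'m"
  assumes "\<And>x y. y \<bullet> (A *v x) = x \<bullet> (A *v y)"
  shows "transpose A = A"
proof -
  have "(transpose A *v x - A *v x) \<bullet> (transpose A *v x - A *v x) = 0" for x
  proof -
    let ?d = "transpose A *v x - A *v x"
    have "?d \<bullet> (transpose A *v x) = x \<bullet> (A *v ?d)"
      by (metis inner_transpose_matrix_vector inner_commute)
    also have "\<dots> = ?d \<bullet> (A *v x)" by (rule assms)
    finally show ?thesis by (simp add: inner_diff_right)
  qed
  then show ?thesis by (simp add: matrix_eq)
qed

lemma matrix_vector_eigenbasis_expansion: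
  assumes "orthonormal_eigenbasis M UNIV U" "\<And>u. u \<in> U \<Longrightarrow> S *v u = g u *\<^sub>R u"
  shows "S *v x = (\<Sum>u\<in>U. (g u * (u \<bullet> x)) *\<^sub>R u)"
proof -
  have "S *v x = S *v (\<Sum>u\<in>U. (u \<bullet> x) *\<^sub>R u)"
    using orthonormal_eigenbasis_expansion[OF assms(1)] by metis
  also have "\<dots> = (\<Sum>u\<in>U. (u \<bullet> x) *\<^sub>R (S *v u))"
    by (simp add: linear_sum[OF matrix_vector_mul_linear] matrix_vector_mult_scaleR)
  also have "\<dots> = (\<Sum>u\<in>U. (g u * (u \<bullet> x)) *\<^sub>R u)"
    by (intro sum.cong refl) (simp add: assms(2) mult.commute)
  finally show ?thesis .
qed

lemma psd_square_root_on_eigenvector: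
  assumes S: "psd S" and M: "S ** S = M" and u: "M *v u = l *\<^sub>R u" and l: "l \<ge> 0"
  shows "S *v u = sqrt l *\<^sub>R u"
proof (cases "l = 0")
  case True
  have sym: "transpose S = S" using S by (simp add: psd_def)
  have "(S *v u) \<bullet> (S *v u) = u \<bullet> (M *v u)"
    by (simp add: M[symmetric] inner_symmetric_matrix_vector[OF sym] matrix_vector_mul_assoc[symmetric])
  then show ?thesis using True u by simp
next
  case False
  define z where "z = S *v u - sqrt l *\<^sub>R u"
  have "S *v z = - sqrt l *\<^sub>R z"
    using u l M[symmetric]
    by (simp add: z_def matrix_vector_mult_diff_distrib matrix_vector_mult_scaleR
        matrix_vector_mul_assoc algebra_simps)
  then have "0 \<le> - sqrt l * (z \<bullet> z)" using S by (metis psd_def inner_scaleR_right)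
  moreover have "sqrt l > 0" using False l by simp
  ultimately have "z \<bullet> z \<le> 0" by (simp add: mult_le_0_iff)
  then have "z = 0" by (metis inner_ge_zero inner_eq_zero_iff order_antisym)
  then show ?thesis by (simp add: z_def)
qed

lemma psd_square_root_exists:
  fixes M :: "real^'m^'m"
  assumes M: "psd M"
  obtains S where "psd S" "S ** S = M"
proof -
  obtain U where U: "orthonormal_eigenbasis M UNIV U"
    using M orthonormal_eigenbasis_exists by (auto simp: psd_def)
  have U': "finite U" "pairwise orthogonal U" "\<forall>u\<in>U. norm u = 1"
    using U by (auto simp: orthonormal_eigenbasis_def)
  define l where "l u = u \<bullet> (M *v u)" for u
  have l: "M *v u = l u *\<^sub>R u" "l u \<ge> 0" if "u \<in> U" for u
    using U that M by (auto simp: orthonormal_eigenbasis_def l_def psd_def)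
  define f where "f x = (\<Sum>u\<in>U. (sqrt (l u) * (u \<bullet> x)) *\<^sub>R u)" for x
  have "linear f"
    unfolding f_def
    by (rule linearI) (simp_all add: inner_add_right scaleR_sum_right sum.distrib algebra_simps)
  then have Sx: "matrix f *v x = f x" for x
    by (simp add: matrix_works linear_matrix_vector_mul_eq)
  have "psd (matrix f)"
    unfolding psd_def
  proof
    show "transpose (matrix f) = matrix f"
      by (rule symmetric_if_inner_swap)
        (simp add: Sx f_def inner_sum_right mult.commute mult.left_commute inner_commute)
    show "\<forall>x. 0 \<le> x \<bullet> (matrix f *v x)"
      using l(2) by (auto simp: Sx f_def inner_sum_right inner_commute mult.assoc
          intro!: sum_nonneg mult_nonneg_nonneg[OF real_sqrt_ge_zero zero_le_square])
  qed
  moreover have "matrix f ** matrix f = M"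
  proof -
    have "(matrix f ** matrix f) *v x = M *v x" for x
    proof -
      have "(matrix f ** matrix f) *v x = (\<Sum>u\<in>U. (sqrt (l u) * (u \<bullet> f x)) *\<^sub>R u)"
        by (simp add: Sx f_def matrix_vector_mul_assoc[symmetric])
      also have "\<dots> = (\<Sum>u\<in>U. (l u * (u \<bullet> x)) *\<^sub>R u)"
        unfolding f_def using inner_orthonormal_sum[OF U'] l(2)
        by (intro sum.cong refl) (simp add: mult.assoc[symmetric])
      also have "\<dots> = M *v x"
        using matrix_vector_eigenbasis_expansion[OF U l(1)] by simp
      finally show ?thesis .
    qed
    then show ?thesis by (simp add: matrix_eq)
  qed
  ultimately show thesis by (rule that)
qed

lemma psd_square_root_unique:
  fixes M :: "real^'m^'m"
  assumes M: "psd M" and S: "psd S" "S ** S = M" and S': "psd S'" "S' ** S' = M"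
  shows "S = S'"
proof -
  obtain U where U: "orthonormal_eigenbasis M UNIV U"
    using M orthonormal_eigenbasis_exists by (auto simp: psd_def)
  define l where "l u = u \<bullet> (M *v u)" for u
  have l: "M *v u = l u *\<^sub>R u" "l u \<ge> 0" if "u \<in> U" for u
    using U that M by (auto simp: orthonormal_eigenbasis_def l_def psd_def)
  have "S *v x = S' *v x" for x
    using matrix_vector_eigenbasis_expansion[OF U psd_square_root_on_eigenvector[OF S l]]
      matrix_vector_eigenbasis_expansion[OF U psd_square_root_on_eigenvector[OF S' l]]
    by simp
  then show ?thesis by (simp add: matrix_eq)
qed

lemma psd_sqrt:
  assumes "psd M"
  shows "psd (psd_sqrt M)" "psd_sqrt M ** psd_sqrt M = M"
proof -
  obtain S where S: "psd S" "S ** S = M"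
    using psd_square_root_exists[OF assms] .
  have "psd_sqrt M = S"
    unfolding psd_sqrt_def
    using S psd_square_root_unique[OF assms] by (intro the_equality) auto
  then show "psd (psd_sqrt M)" "psd_sqrt M ** psd_sqrt M = M" using S by simp_all
qed

subsection \<open>The Riccati step\<close>

lemma schur_complement_quadratic_form:
  fixes P :: "real^'n^'n" and M :: "real^'k^'n" and E :: "real^'k^'k" and x :: "real^'n"
  defines "D \<equiv> E + transpose M ** P ** M"
  defines "u \<equiv> matrix_inv D *v (transpose M *v (P *v x))"
  assumes symP: "transpose P = P" and inv: "invertible D"
  shows "x \<bullet> ((P - P ** M ** matrix_inv D ** transpose M ** P) *v x)
    = (x - M *v u) \<bullet> (P *v (x - M *v u)) + u \<bullet> (E *v u)"
proof -
  define y where "y = transpose M *v (P *v x)"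
  have "D *v (matrix_inv D *v z) = z" for z
    by (simp add: matrix_vector_mul_assoc matrix_inv_right[OF inv])
  then have Du: "D *v u = y" by (simp only: u_def y_def)
  have Mu_Px: "(M *v u) \<bullet> (P *v x) = u \<bullet> y"
    unfolding y_def by (rule inner_transpose_matrix_vector[symmetric])
  have "x \<bullet> ((P ** M ** matrix_inv D ** transpose M ** P) *v x) = x \<bullet> (P *v (M *v u))"
    by (simp only: u_def matrix_vector_mul_assoc matrix_mul_assoc)
  also have "\<dots> = u \<bullet> y"
    by (metis Mu_Px inner_commute inner_symmetric_matrix_vector[OF symP])
  finally have quad: "x \<bullet> ((P - P ** M ** matrix_inv D ** transpose M ** P) *v x)
      = x \<bullet> (P *v x) - u \<bullet> y"
    by (simp add: matrix_vector_mult_diff_rdistrib inner_diff_right)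
  have "(M *v u) \<bullet> (P *v (M *v u)) = u \<bullet> ((transpose M ** P ** M) *v u)"
    by (simp only: matrix_vector_mul_assoc[symmetric] inner_transpose_matrix_vector)
  moreover have "u \<bullet> y = u \<bullet> (E *v u) + u \<bullet> ((transpose M ** P ** M) *v u)"
    using Du unfolding D_def by (metis inner_add_right matrix_vector_mult_add_rdistrib)
  moreover have "(x - M *v u) \<bullet> (P *v (x - M *v u))
      = x \<bullet> (P *v x) - 2 * (u \<bullet> y) + (M *v u) \<bullet> (P *v (M *v u))"
    using Mu_Px inner_symmetric_matrix_vector[OF symP, of x "M *v u"]
    by (simp add: matrix_vector_mult_diff_distrib inner_diff_left inner_diff_right inner_commute)
  ultimately show ?thesis unfolding quad by linarith
qed

lemma psd_schur_complement:
  fixes P :: "real^'n^'n" and M :: "real^'k^'n" and E :: "real^'k^'k"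
  assumes P: "psd P" and E: "pd E"
  defines "D \<equiv> E + transpose M ** P ** M"
  shows "psd (P - P ** M ** matrix_inv D ** transpose M ** P)"
  unfolding psd_def
proof
  have D: "pd D" unfolding D_def using E P by (intro pd_add_psd psd_congruence)
  have symP: "transpose P = P" using P by (simp add: psd_def)
  have symDi: "transpose (matrix_inv D) = matrix_inv D"
    using pd_matrix_inv[OF D] by (simp add: pd_def)
  show "transpose (P - P ** M ** matrix_inv D ** transpose M ** P)
      = P - P ** M ** matrix_inv D ** transpose M ** P"
    by (simp add: transpose_diff matrix_transpose_mul symP symDi matrix_mul_assoc)
  show "\<forall>x. 0 \<le> x \<bullet> ((P - P ** M ** matrix_inv D ** transpose M ** P) *v x)"
    using P pd_imp_psd[OF E]
    by (simp add: schur_complement_quadratic_form[OF symP pd_invertible[OF D[unfolded D_def]]]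
        D_def psd_def add_nonneg_nonneg)
qed

lemma Pi_step_schur_form:
  fixes Ak :: "real^'n^'n" and Bk :: "real^'m^'n" and Rk Sig :: "real^'m^'m"
  assumes eps: "\<epsilon> > 0" and R: "pd Rk" and Sig: "psd Sig" and P: "psd P"
  defines "H \<equiv> psd_sqrt Sig"
  defines "M \<equiv> Bk ** H"
  shows "Pi_step \<epsilon> Ak Bk Rk Sig P = transpose Ak **
    (P - P ** M ** matrix_inv ((\<epsilon> *\<^sub>R mat 1 + transpose H ** Rk ** H) + transpose M ** P ** M)
       ** transpose M ** P) ** Ak"
proof -
  define C where "C = (1/\<epsilon>) *\<^sub>R (Rk + transpose Bk ** P ** Bk)"
  define G where "G = mat 1 + H ** C ** H"
  have H: "psd H" using psd_sqrt(1)[OF Sig] by (simp add: H_def)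
  then have symH: "transpose H = H" by (simp add: psd_def)
  have "psd C"
    unfolding C_def using eps by (intro psd_scaleR psd_add psd_congruence pd_imp_psd[OF R] P) simp
  then have "pd (mat 1 + transpose H ** C ** H)"
    by (intro pd_add_psd pd_mat_1 psd_congruence)
  then have G: "invertible G" by (simp add: G_def symH pd_invertible)
  have "(\<epsilon> *\<^sub>R mat 1 + transpose H ** Rk ** H) + transpose M ** P ** M = \<epsilon> *\<^sub>R G"
    using eps by (simp add: G_def C_def M_def symH matrix_transpose_mul matrix_add_ldistrib
        matrix_add_rdistrib matrix_scalar_ac scalar_matrix_assoc[symmetric] matrix_mul_assoc
        scaleR_right_distrib)
  then have "matrix_inv ((\<epsilon> *\<^sub>R mat 1 + transpose H ** Rk ** H) + transpose M ** P ** M)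
      = (1/\<epsilon>) *\<^sub>R matrix_inv G"
    using eps G by (simp add: matrix_inv_scaleR)
  then show ?thesis
    by (simp add: Pi_step_def Let_def C_def G_def H_def[symmetric] M_def symH matrix_transpose_mul
        matrix_diff_ldistrib matrix_diff_rdistrib matrix_scalar_ac scalar_matrix_assoc[symmetric]
        matrix_mul_assoc)
qed

lemma Pi_step_psd:
  fixes Ak :: "real^'n^'n" and Bk :: "real^'m^'n" and Rk Sig :: "real^'m^'m"
  assumes eps: "\<epsilon> > 0" and R: "pd Rk" and Sig: "psd Sig" and P: "psd P"
  shows "psd (Pi_step \<epsilon> Ak Bk Rk Sig P)"
  unfolding Pi_step_schur_form[OF assms]
  using eps by (intro psd_congruence psd_schur_complement P pd_add_psd pd_scaleR pd_mat_1
      psd_congruence pd_imp_psd[OF R])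

text \<open>Eliminating \<open>psd_sqrt\<close> here spares us proving its continuity.\<close>

lemma Pi_step_push_through_form:
  fixes Ak :: "real^'n^'n" and Bk :: "real^'m^'n" and Rk Sig :: "real^'m^'m"
  assumes eps: "\<epsilon> > 0" and R: "pd Rk" and Sig: "psd Sig" and P: "psd P"
  defines "C \<equiv> (1/\<epsilon>) *\<^sub>R (Rk + transpose Bk ** P ** Bk)"
  shows "invertible (mat 1 + C ** Sig)"
    and "Pi_step \<epsilon> Ak Bk Rk Sig P = transpose Ak ** P ** Ak
      - (1/\<epsilon>) *\<^sub>R (transpose Ak ** P ** Bk ** Sig ** matrix_inv (mat 1 + C ** Sig)
          ** transpose Bk ** P ** Ak)"
proof -
  define H where "H = psd_sqrt Sig"
  have H: "psd H" "H ** H = Sig" using psd_sqrt[OF Sig] by (simp_all add: H_def)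
  then have symH: "transpose H = H" by (simp add: psd_def)
  have "psd C"
    unfolding C_def using eps by (intro psd_scaleR psd_add psd_congruence pd_imp_psd[OF R] P) simp
  then have "pd (mat 1 + transpose H ** C ** H)"
    by (intro pd_add_psd pd_mat_1 psd_congruence)
  then have G: "invertible (mat 1 + H ** (C ** H))"
    by (simp add: symH pd_invertible matrix_mul_assoc)
  have CH_H: "C ** H ** H = C ** Sig" by (simp add: H(2)[symmetric] matrix_mul_assoc)
  show "invertible (mat 1 + C ** Sig)"
    using invertible_one_plus_mult_commute[OF G] by (simp add: CH_H)
  have "H ** matrix_inv (mat 1 + H ** C ** H) ** H = Sig ** matrix_inv (mat 1 + C ** Sig)"
    using matrix_inv_one_plus_mult_commute[OF G]
    by (simp add: CH_H H(2)[symmetric] matrix_mul_assoc[symmetric])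
  then have "X ** H ** matrix_inv (mat 1 + H ** C ** H) ** H = X ** Sig ** matrix_inv (mat 1 + C ** Sig)"
    for X :: "real^'m^'n"
    by (metis matrix_mul_assoc)
  then show "Pi_step \<epsilon> Ak Bk Rk Sig P = transpose Ak ** P ** Ak
      - (1/\<epsilon>) *\<^sub>R (transpose Ak ** P ** Bk ** Sig ** matrix_inv (mat 1 + C ** Sig)
          ** transpose Bk ** P ** Ak)"
    by (simp add: Pi_step_def Let_def C_def[symmetric] H_def[symmetric])
qed

lemma continuous_on_Pi_step:
  fixes Ak :: "real^'n^'n" and Bk :: "real^'m^'n" and Rk :: "real^'m^'m"
    and S :: "'a::topological_space \<Rightarrow> real^'m^'m"
  assumes eps: "\<epsilon> > 0" and R: "pd Rk"
    and S: "continuous_on X S" "\<And>x. x \<in> X \<Longrightarrow> psd (S x)"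
    and P: "continuous_on X P" "\<And>x. x \<in> X \<Longrightarrow> psd (P x)"
  shows "continuous_on X (\<lambda>x. Pi_step \<epsilon> Ak Bk Rk (S x) (P x))"
proof -
  let ?C = "\<lambda>x. (1/\<epsilon>) *\<^sub>R (Rk + transpose Bk ** P x ** Bk)"
  have "continuous_on X (\<lambda>x. transpose Ak ** P x ** Ak
      - (1/\<epsilon>) *\<^sub>R (transpose Ak ** P x ** Bk ** S x ** matrix_inv (mat 1 + ?C x ** S x)
          ** transpose Bk ** P x ** Ak))"
    using Pi_step_push_through_form(1)[OF eps R S(2) P(2)]
    by (intro continuous_intros S(1) P(1)) auto
  then show ?thesis
    by (rule continuous_on_cong[THEN iffD1, rotated 2])
      (simp_all add: Pi_step_push_through_form(2)[OF eps R S(2) P(2)])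
qed

subsection \<open>Continuity of the cost\<close>

lemma continuous_on_coordinate: "continuous_on X (\<lambda>S. S i)"
  using continuous_on_product_then_coordinatewise[OF continuous_on_id] .

lemma PiR_continuous_psd:
  fixes A :: "nat \<Rightarrow> real^'n^'n" and B :: "nat \<Rightarrow> real^'m^'n" and R :: "nat \<Rightarrow> real^'m^'m"
  assumes eps: "\<epsilon> > 0" and R: "\<And>k. k < T \<Longrightarrow> pd (R k)" and F: "psd F"
  shows "j \<le> T \<Longrightarrow> continuous_on (MT T) (\<lambda>S. PiR \<epsilon> T A B R F S j)
    \<and> (\<forall>S\<in>MT T. psd (PiR \<epsilon> T A B R F S j))"
proof (induction j)
  case 0
  then show ?case using F by simp
next
  case (Suc j)
  then have i: "T - Suc j < T" by simp
  then have "psd (S (T - Suc j))" if "S \<in> MT T" for S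
    using that by (simp add: MT_def)
  with Suc i show ?case
    by (auto intro!: continuous_on_Pi_step Pi_step_psd eps R continuous_on_coordinate)
qed

lemma
  fixes A :: "nat \<Rightarrow> real^'n^'n" and B :: "nat \<Rightarrow> real^'m^'n" and R :: "nat \<Rightarrow> real^'m^'m"
  assumes "\<epsilon> > 0" and "\<And>k. k < T \<Longrightarrow> pd (R k)" and "psd F" and "k \<le> T"
  shows continuous_on_Pi: "continuous_on (MT T) (\<lambda>S. Pi \<epsilon> T A B R F S k)"
    and Pi_psd: "S \<in> MT T \<Longrightarrow> psd (Pi \<epsilon> T A B R F S k)"
  using PiR_continuous_psd[OF assms(1-3), where j = "T - k"] by (simp_all add: Pi_def)

lemma
  fixes A :: "nat \<Rightarrow> real^'n^'n" and B :: "nat \<Rightarrow> real^'m^'n" and R :: "nat \<Rightarrow> real^'m^'m"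
  assumes eps: "\<epsilon> > 0" and R: "\<And>k. k < T \<Longrightarrow> pd (R k)" and F: "psd F" and k: "k < T"
  shows SigmaQ_pd: "S \<in> MT T \<Longrightarrow> pd (SigmaQ \<epsilon> T A B R F S k)"
    and continuous_on_SigmaQ: "continuous_on (MT T) (\<lambda>S. SigmaQ \<epsilon> T A B R F S k)"
proof -
  have W: "pd (R k + transpose (B k) ** Pi \<epsilon> T A B R F S (Suc k) ** B k)" if "S \<in> MT T" for S
    using k that by (intro pd_add_psd R psd_congruence Pi_psd[OF eps R F]) simp_all
  then show "S \<in> MT T \<Longrightarrow> pd (SigmaQ \<epsilon> T A B R F S k)"
    unfolding SigmaQ_def using eps by (intro pd_scaleR pd_matrix_inv)
  show "continuous_on (MT T) (\<lambda>S. SigmaQ \<epsilon> T A B R F S k)"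
    unfolding SigmaQ_def using k
    by (intro continuous_intros continuous_on_Pi[OF eps R F] pd_invertible W) simp_all
qed

theorem lemma3:
  fixes \<epsilon> :: real and T :: nat
    and A :: "nat \<Rightarrow> real^'n^'n" and B :: "nat \<Rightarrow> real^'m^'n"
    and R :: "nat \<Rightarrow> real^'m^'m" and Sw :: "nat \<Rightarrow> real^'n^'n"
    and F Sx :: "real^'n^'n"
  assumes "T \<ge> 1" and "\<epsilon> > 0"
    and "\<And>k. k < T \<Longrightarrow> pd (R k)"
    and "\<And>k. k < T \<Longrightarrow> pd (Sw k)"
    and "pd F" and "pd Sx"
  shows "continuous_on (MT T) (Jcheck \<epsilon> T A B R Sw F Sx)"
proof -
  note eps = assms(2) and R = assms(3) and F = pd_imp_psd[OF assms(5)]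
  have det_nonzero: "det (S k + SigmaQ \<epsilon> T A B R F S k) \<noteq> 0" "det (SigmaQ \<epsilon> T A B R F S k) \<noteq> 0"
    if "S \<in> MT T" "k < T" for S k
  proof -
    have "pd (SigmaQ \<epsilon> T A B R F S k + S k)"
      using that by (intro pd_add_psd SigmaQ_pd[OF eps R F]) (simp_all add: MT_def)
    then show "det (S k + SigmaQ \<epsilon> T A B R F S k) \<noteq> 0" "det (SigmaQ \<epsilon> T A B R F S k) \<noteq> 0"
      using SigmaQ_pd[OF eps R F that(2) that(1)]
      by (simp_all add: add.commute pd_invertible invertible_det_nz[symmetric])
  qed
  show ?thesis
    unfolding Jcheck_def using det_nonzero
    by (intro continuous_intros continuous_on_Pi[OF eps R F] continuous_on_SigmaQ[OF eps R F]
        continuous_on_coordinate) auto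
qed

end
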